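(* In the setting of the context, with $\alpha_k=\frac a{b+k}$, $a>0$, $b>1$, $\frac ab\le\frac1{2M\tilde L}$, put $s=a\sigma_{\min}^2$. For $n\ge1$ let $S_n=\sum_{i=1}^nq(\alpha_{i-1})B_i^{(n)}$. If $s<2$, there is a constant $K$ independent of $n$ with $S_n\le K(b+n)^{-s}$ for all $n\ge1$. If $s>2$, there is a constant $K$ independent of $n$ with $S_n\le K(b+n)^{-2}$ for all $n\ge1$.
   Context: Standing setting: $M\ge N$, $A\in\mathbb{R}^{M\times N}$ of full column rank with rows $a_1,\dots,a_M$, right-hand side $(b_1,\dots,b_M)$, $F(x)=\frac12\|Ax-(b_1,\dots,b_M)^\top\|^2$ with unique minimizer $x_*$; singular values $\sigma_1\ge\dots\ge\sigma_N>0$, $\sigma_{\max}=\sigma_1$, $\sigma_{\min}=\sigma_N$, $c(A)=\sigma_{\max}^2/\sigma_{\min}^2$, $\tilde L=\max_i\|a_i\|^2$, $f_i(x)=\frac M2(\langle a_i,x\rangle-b_i)^2$, $\sigma^2=\frac1M\sum_i\|\nabla f_i(x_* )\|^2$. Fix $\ell$. For $\alpha>0$: $A(\alpha)=1-2\alpha\sigma_\ell^2$, $B(\alpha)=\alpha^2M\tilde Lc(A)\sigma_{\max}^2$, $p(\alpha)=1-\alpha\sigma_{\min}^2$, $q(\alpha)=2\alpha^2\sigma^2$. For fixed $n$ and $0\le k\le n$: $B_k^{(n)}=\sum_{j=k}^n\Big(\prod_{i=j+1}^nA(\alpha_i)\Big)B(\alpha_j)\Big(\prod_{i=k}^{j-1}p(\alpha_i)\Big)$.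 (Step-size scalars $a,b$ are unrelated to $a_i,b_i$.) *)

theory Defs
  imports "Jordan_Normal_Form.Char_Poly" "HOL-Library.Multiset"
begin

definition sq_sing_vals :: "real mat \<Rightarrow> real list" where
  "sq_sing_vals A = rev (sorted_list_of_multiset (proots (char_poly (transpose_mat A * A))))"

(* k-th singular value, 1 \<le> k \<le> N, sigma_1 \<ge> ... \<ge> sigma_N *)
definition sing_val :: "real mat \<Rightarrow> nat \<Rightarrow> real" where
  "sing_val A k = sqrt (sq_sing_vals A ! (k - 1))"

definition sigma_max :: "real mat \<Rightarrow> real" where
  "sigma_max A = sing_val A 1"

definition sigma_min :: "real mat \<Rightarrow> real" where
  "sigma_min A = sing_val A (dim_col A)"

definition cond_num :: "real mat \<Rightarrow> real" where
  "cond_num A = (sigma_max A)^2 / (sigma_min A)^2"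

definition sqnorm :: "real vec \<Rightarrow> real" where
  "sqnorm v = v \<bullet> v"

definition Ltil :: "real mat \<Rightarrow> real" where
  "Ltil A = Max {sqnorm (row A i) | i. i < dim_row A}"

definition LS_obj :: "real mat \<Rightarrow> real vec \<Rightarrow> real vec \<Rightarrow> real" where
  "LS_obj A bv x = sqnorm (A *\<^sub>v x - bv) / 2"

definition x_star :: "real mat \<Rightarrow> real vec \<Rightarrow> real vec" where
  "x_star A bv = (THE x. x \<in> carrier_vec (dim_col A) \<and>
      (\<forall>y \<in> carrier_vec (dim_col A). LS_obj A bv x \<le> LS_obj A bv y))"

(* gradient of f_i(x) = M/2 (<a_i,x> - b_i)^2 *)
definition grad_fi :: "real mat \<Rightarrow> real vec \<Rightarrow> nat \<Rightarrow> real vec \<Rightarrow> real vec" where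
  "grad_fi A bv i x = (real (dim_row A) * (row A i \<bullet> x - bv $ i)) \<cdot>\<^sub>v row A i"

definition noise_var :: "real mat \<Rightarrow> real vec \<Rightarrow> real" where
  "noise_var A bv = (\<Sum>i<dim_row A. sqnorm (grad_fi A bv i (x_star A bv))) / real (dim_row A)"

definition Afac :: "real mat \<Rightarrow> nat \<Rightarrow> real \<Rightarrow> real" where
  "Afac A l \<alpha> = 1 - 2 * \<alpha> * (sing_val A l)^2"

definition Bfac :: "real mat \<Rightarrow> real \<Rightarrow> real" where
  "Bfac A \<alpha> = \<alpha>^2 * real (dim_row A) * Ltil A * cond_num A * (sigma_max A)^2"

definition pfac :: "real mat \<Rightarrow> real \<Rightarrow> real" where
  "pfac A \<alpha> = 1 - \<alpha> * (sigma_min A)^2"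

definition qfac :: "real mat \<Rightarrow> real vec \<Rightarrow> real \<Rightarrow> real" where
  "qfac A bv \<alpha> = 2 * \<alpha>^2 * noise_var A bv"

definition Bkn :: "real mat \<Rightarrow> nat \<Rightarrow> (nat \<Rightarrow> real) \<Rightarrow> nat \<Rightarrow> nat \<Rightarrow> real" where
  "Bkn A l \<alpha> n k = (\<Sum>j=k..n. (\<Prod>i=j+1..n. Afac A l (\<alpha> i)) * Bfac A (\<alpha> j)
                                 * (\<Prod>i=k..<j. pfac A (\<alpha> i)))"

definition Sn :: "real mat \<Rightarrow> real vec \<Rightarrow> nat \<Rightarrow> (nat \<Rightarrow> real) \<Rightarrow> nat \<Rightarrow> real" where
  "Sn A bv l \<alpha> n = (\<Sum>i=1..n. qfac A bv (\<alpha> (i - 1)) * Bkn A l \<alpha> n i)"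

end

theory Submission
  imports Defs "HOL-Analysis.Convex"
begin

text \<open>
  Each eigenvalue of A^T A is a Rayleigh quotient
  |A v|^2 / |v|^2 of a complex eigenvector v, hence real, nonnegative and (by Cauchy-Schwarz, row by
  row) at most sum_i |a_i|^2 <= M L. So the step-size condition keeps every factor A(alpha_t) and
  p(alpha_t) in [0, 1], and sigma_l^2 >= sigma_min^2 gives A(alpha) <= 1 - 2 alpha sigma_min^2.
  As 1 - c/x <= (x / (x + 1))^c, products of such factors telescope into ratios of powers of b + k,
  so the (i, j) term of S_n is at most D (b+n)^(-2s) (b+i)^(s-2) (b+j)^(s-2) and
  S_n <= D (b+n)^(-2s) (sum_{i<=n} (b+i)^(s-2))^2. The last sum is O((b+n)^(s/2)) for s < 2 and at
  most (b+n)^(s-1) for s > 2.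
\<close>

section \<open>The spectrum of \<open>A\<^sup>T A\<close>\<close>

lemma cscalar_prod_self:
  fixes v :: "complex vec"
  shows "v \<bullet>c v = complex_of_real (\<Sum>j<dim_vec v. (cmod (v $ j))\<^sup>2)"
proof -
  have "v \<bullet>c v = (\<Sum>j<dim_vec v. v $ j * cnj (v $ j))"
    by (simp add: scalar_prod_def atLeast0LessThan)
  also have "\<dots> = (\<Sum>j<dim_vec v. complex_of_real ((cmod (v $ j))\<^sup>2))"
    by (simp only: complex_norm_square)
  finally show ?thesis by simp
qed

lemma of_real_mat_mult_vec_conjugate:
  fixes A :: "real mat" and v :: "complex vec"
  assumes "v \<in> carrier_vec (dim_col A)"
  shows "map_mat complex_of_real A *\<^sub>v conjugate v = conjugate (map_mat complex_of_real A *\<^sub>v v)"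
proof (rule eq_vecI)
  fix i assume "i < dim_vec (conjugate (map_mat complex_of_real A *\<^sub>v v))"
  then have i: "i < dim_row A" by simp
  have "conjugate (row (map_mat complex_of_real A) i) = row (map_mat complex_of_real A) i"
    using i by (intro eq_vecI) auto
  moreover have "conjugate (row (map_mat complex_of_real A) i \<bullet> v)
      = conjugate (row (map_mat complex_of_real A) i) \<bullet> conjugate v"
    using i assms by (intro conjugate_sprod_vec[of _ "dim_col A"]) auto
  ultimately show "(map_mat complex_of_real A *\<^sub>v conjugate v) $ i = conjugate (map_mat complex_of_real A *\<^sub>v v) $ i"
    using i by simp
qed simp

lemma gram_eigenvector_rayleigh:
  fixes A :: "real mat"
  assumes A: "A \<in> carrier_mat M N"
    and ev: "eigenvector (map_mat complex_of_real (transpose_mat A * A)) v c"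
  defines "w \<equiv> map_mat complex_of_real A *\<^sub>v v"
  shows "c * (v \<bullet>c v) = w \<bullet>c w"
proof -
  let ?B = "map_mat complex_of_real A"
  have B: "?B \<in> carrier_mat M N" using A by simp
  have v: "v \<in> carrier_vec N" and eig: "map_mat complex_of_real (transpose_mat A * A) *\<^sub>v v = c \<cdot>\<^sub>v v"
    using ev A unfolding eigenvector_def by auto
  have gram: "map_mat complex_of_real (transpose_mat A * A) = transpose_mat ?B * ?B"
    using A by (simp add: of_real_hom.mat_hom_mult[of _ N M _ N] map_mat_transpose)
  have "c * (v \<bullet>c v) = (c \<cdot>\<^sub>v v) \<bullet>c v" using v by simp
  also have "\<dots> = (transpose_mat ?B *\<^sub>v w) \<bullet> conjugate v"
    using eig gram A v by (simp add: w_def)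
  also have "\<dots> = w \<bullet> (?B *\<^sub>v conjugate v)"
    using B v by (intro transpose_vec_mult_scalar) (auto simp: w_def)
  also have "\<dots> = w \<bullet>c w"
    using A v by (simp add: of_real_mat_mult_vec_conjugate w_def)
  finally show ?thesis .
qed

lemma cmod_of_real_sprod_sq_le:
  fixes a :: "real vec" and v :: "complex vec"
  assumes dim: "dim_vec a = dim_vec v"
  shows "(cmod (map_vec complex_of_real a \<bullet> v))\<^sup>2 \<le> sqnorm a * (\<Sum>j<dim_vec v. (cmod (v $ j))\<^sup>2)"
proof -
  have "cmod (map_vec complex_of_real a \<bullet> v) \<le> (\<Sum>j<dim_vec v. \<bar>a $ j\<bar> * cmod (v $ j))"
    unfolding scalar_prod_def using dim
    by (auto simp: atLeast0LessThan norm_mult intro: order_trans[OF norm_sum])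
  then have "(cmod (map_vec complex_of_real a \<bullet> v))\<^sup>2 \<le> (\<Sum>j<dim_vec v. \<bar>a $ j\<bar> * cmod (v $ j))\<^sup>2"
    by (intro power_mono) auto
  also have "\<dots> \<le> (\<Sum>j<dim_vec v. \<bar>a $ j\<bar>\<^sup>2) * (\<Sum>j<dim_vec v. (cmod (v $ j))\<^sup>2)"
    by (rule Cauchy_Schwarz_ineq_sum)
  also have "(\<Sum>j<dim_vec v. \<bar>a $ j\<bar>\<^sup>2) = sqnorm a"
    using dim by (simp add: sqnorm_def scalar_prod_def atLeast0LessThan power2_eq_square)
  finally show ?thesis .
qed

lemma gram_eigenvalue_real_bounded:
  fixes A :: "real mat"
  assumes A: "A \<in> carrier_mat M N"
    and "eigenvalue (map_mat complex_of_real (transpose_mat A * A)) c"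
  shows "c = complex_of_real (Re c) \<and> 0 \<le> Re c \<and> Re c \<le> (\<Sum>k<M. sqnorm (row A k))"
proof -
  obtain v where ev: "eigenvector (map_mat complex_of_real (transpose_mat A * A)) v c"
    using assms(2) unfolding eigenvalue_def by blast
  define w where "w = map_mat complex_of_real A *\<^sub>v v"
  define V where "V = (\<Sum>j<N. (cmod (v $ j))\<^sup>2)"
  define W where "W = (\<Sum>k<M. (cmod (w $ k))\<^sup>2)"
  have v: "v \<in> carrier_vec N" "v \<noteq> 0\<^sub>v N"
    using ev A unfolding eigenvector_def by auto
  have "c * complex_of_real V = complex_of_real W"
    using gram_eigenvector_rayleigh[OF A ev] v A
    by (simp add: cscalar_prod_self V_def W_def w_def)
  moreover have "v \<bullet>c v = complex_of_real V"
    using cscalar_prod_self[of v] v(1) by (simp add: V_def)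
  then have "complex_of_real V > 0"
    using conjugate_square_greater_0_vec[OF v(1)] v(2) by simp
  ultimately have c: "c = complex_of_real (W / V)"
    by (simp add: field_simps less_complex_def)
  have "W \<le> (\<Sum>k<M. sqnorm (row A k) * V)"
    unfolding W_def
  proof (intro sum_mono)
    fix k assume "k \<in> {..<M}"
    then have "row (map_mat complex_of_real A) k = map_vec complex_of_real (row A k)"
      using A by (intro eq_vecI) auto
    then have "w $ k = map_vec complex_of_real (row A k) \<bullet> v"
      using A \<open>k \<in> {..<M}\<close> by (simp add: w_def)
    then show "(cmod (w $ k))\<^sup>2 \<le> sqnorm (row A k) * V"
      using cmod_of_real_sprod_sq_le[of "row A k" v] A v by (simp add: V_def)
  qed
  moreover have "V > 0" using \<open>complex_of_real V > 0\<close> by (simp add: less_complex_def)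
  ultimately have "W / V \<le> (\<Sum>k<M. sqnorm (row A k))"
    by (simp add: divide_le_eq flip: sum_distrib_right)
  moreover have "0 \<le> W" by (simp add: W_def sum_nonneg)
  ultimately show ?thesis using c \<open>V > 0\<close> by simp
qed

lemma proots_prod_list_linear: "proots (\<Prod>r\<leftarrow>rs. [:- r, 1:]) = mset (rs :: 'a :: idom list)"
proof (induction rs)
  case (Cons r rs)
  have "(\<Prod>r\<leftarrow>rs. [:- r, 1:]) \<noteq> 0" by (auto simp: prod_list_zero_iff)
  then have "proots (\<Prod>r\<leftarrow>r # rs. [:- r, 1:]) = proots [:- r, 1:] + proots (\<Prod>r\<leftarrow>rs. [:- r, 1:])"
    by (simp only: list.map prod_list.Cons) (rule proots_mult, simp_all)
  then show ?case using Cons.IH proots_linear_factor[of "- r"] by simp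
qed simp

interpretation of_real_poly_hom: map_poly_inj_idom_hom complex_of_real ..

text \<open>Splitting over \<open>\<real>\<close> is what makes the list \<open>sq_sing_vals A\<close> of real roots have length \<open>N\<close>.\<close>

lemma char_poly_gram_splits:
  fixes A :: "real mat"
  assumes A: "A \<in> carrier_mat M N"
  obtains rs where "char_poly (transpose_mat A * A) = (\<Prod>r\<leftarrow>rs. [:- r, 1:])" "length rs = N"
    "\<And>r. r \<in> set rs \<Longrightarrow> 0 \<le> r \<and> r \<le> (\<Sum>k<M. sqnorm (row A k))"
proof -
  let ?S = "transpose_mat A * A"
  have S: "?S \<in> carrier_mat N N" using A by auto
  then have Sc: "map_mat complex_of_real ?S \<in> carrier_mat N N" by simp
  obtain cs where cs: "char_poly (map_mat complex_of_real ?S) = (\<Prod>c\<leftarrow>cs. [:- c, 1:])" "length cs = N"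
    using char_poly_factorized[OF Sc] by blast
  have cs_real: "c = complex_of_real (Re c) \<and> 0 \<le> Re c \<and> Re c \<le> (\<Sum>k<M. sqnorm (row A k))"
    if "c \<in> set cs" for c
  proof (rule gram_eigenvalue_real_bounded[OF A])
    have "poly (char_poly (map_mat complex_of_real ?S)) c = 0"
      unfolding cs(1) using that by (induction cs) (auto simp: poly_prod_list)
    then show "eigenvalue (map_mat complex_of_real ?S) c"
      using eigenvalue_root_char_poly[OF Sc] by simp
  qed
  define rs where "rs = map Re cs"
  have cs_rs: "cs = map complex_of_real rs"
    unfolding rs_def using cs_real by (induction cs) auto
  have "map_poly complex_of_real (char_poly ?S) = char_poly (map_mat complex_of_real ?S)"
    by (rule sym, rule of_real_hom.char_poly_hom[OF S])
  also have "\<dots> = map_poly complex_of_real (\<Prod>r\<leftarrow>rs. [:- r, 1:])"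
    unfolding cs(1) cs_rs of_real_poly_hom.hom_prod_list by (simp add: o_def)
  finally have "char_poly ?S = (\<Prod>r\<leftarrow>rs. [:- r, 1:])" by simp
  moreover have "length rs = N" using cs(2) by (simp add: rs_def)
  moreover have "0 \<le> r \<and> r \<le> (\<Sum>k<M. sqnorm (row A k))" if "r \<in> set rs" for r
    using that cs_real by (auto simp: rs_def)
  ultimately show ?thesis using that by blast
qed

lemma sq_sing_vals_spectrum:
  fixes A :: "real mat"
  assumes A: "A \<in> carrier_mat M N"
  shows "length (sq_sing_vals A) = N" "sorted (rev (sq_sing_vals A))"
    "\<And>x. x \<in> set (sq_sing_vals A) \<Longrightarrow> 0 \<le> x \<and> x \<le> (\<Sum>k<M. sqnorm (row A k))"
proof -
  obtain rs where rs: "char_poly (transpose_mat A * A) = (\<Prod>r\<leftarrow>rs. [:- r, 1:])" "length rs = N"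
    "\<And>r. r \<in> set rs \<Longrightarrow> 0 \<le> r \<and> r \<le> (\<Sum>k<M. sqnorm (row A k))"
    using char_poly_gram_splits[OF A] by blast
  have "sq_sing_vals A = rev (sort rs)"
    unfolding sq_sing_vals_def rs(1) proots_prod_list_linear by simp
  then show "length (sq_sing_vals A) = N" "sorted (rev (sq_sing_vals A))"
    "\<And>x. x \<in> set (sq_sing_vals A) \<Longrightarrow> 0 \<le> x \<and> x \<le> (\<Sum>k<M. sqnorm (row A k))"
    using rs(2,3) by auto
qed

lemma sing_val_sq:
  fixes A :: "real mat"
  assumes A: "A \<in> carrier_mat M N" and k: "1 \<le> k" "k \<le> N"
  shows "(sing_val A k)\<^sup>2 = sq_sing_vals A ! (k - 1)"
proof -
  have "sq_sing_vals A ! (k - 1) \<in> set (sq_sing_vals A)"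
    using k sq_sing_vals_spectrum(1)[OF A] by simp
  then show ?thesis
    using sq_sing_vals_spectrum(3)[OF A] by (simp add: sing_val_def)
qed

lemma sing_val_sq_antimono:
  fixes A :: "real mat"
  assumes A: "A \<in> carrier_mat M N" and jk: "1 \<le> j" "j \<le> k" "k \<le> N"
  shows "(sing_val A k)\<^sup>2 \<le> (sing_val A j)\<^sup>2"
  using sorted_rev_nth_mono[OF sq_sing_vals_spectrum(2)[OF A], of "j - 1" "k - 1"] jk
  by (simp add: sing_val_sq[OF A] sq_sing_vals_spectrum(1)[OF A])

lemma sing_val_sq_le_sum_row_sqnorms:
  fixes A :: "real mat"
  assumes A: "A \<in> carrier_mat M N" and k: "1 \<le> k" "k \<le> N"
  shows "(sing_val A k)\<^sup>2 \<le> (\<Sum>i<M. sqnorm (row A i))"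
  using sq_sing_vals_spectrum[OF A] k by (simp add: sing_val_sq[OF A k])

lemma sqnorm_nonneg: "sqnorm v \<ge> 0"
  unfolding sqnorm_def scalar_prod_def by (intro sum_nonneg) auto

lemma sum_row_sqnorms_le_Ltil:
  fixes A :: "real mat"
  assumes A: "A \<in> carrier_mat M N"
  shows "(\<Sum>k<M. sqnorm (row A k)) \<le> real M * Ltil A"
proof -
  have "(\<Sum>k<M. sqnorm (row A k)) \<le> (\<Sum>k<M. Ltil A)"
    unfolding Ltil_def using A by (intro sum_mono Max_ge) auto
  then show ?thesis by simp
qed

section \<open>Harmonic step sizes\<close>

lemma pos_if_le_inverse_double:
  fixes x c :: real
  assumes "0 < x" "x \<le> 1 / (2 * c)"
  shows "c > 0"
proof -
  have "0 < 1 / (2 * c)" using assms by linarith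
  then show ?thesis by (simp add: zero_less_divide_1_iff)
qed

lemma step_size_mult_le_half:
  fixes x c lam :: real
  assumes x: "0 < x" "x \<le> 1 / (2 * c)" and lam: "lam \<le> c"
  shows "x * lam \<le> 1 / 2"
proof -
  have "c > 0" using pos_if_le_inverse_double[OF x] .
  have "x * lam \<le> x * c" using x lam by (intro mult_left_mono) auto
  also have "\<dots> \<le> 1 / (2 * c) * c" using x \<open>c > 0\<close> by (intro mult_right_mono) auto
  also have "\<dots> = 1 / 2" using \<open>c > 0\<close> by simp
  finally show ?thesis .
qed

lemma powr_mult_one_minus_div_le:
  fixes x c :: real
  assumes x: "x > 0" and c: "c \<ge> 0"
  shows "x powr (- c) * (1 - c / x) \<le> (x + 1) powr (- c)"
proof -
  have "1 - c / x \<le> exp (- c / x)" using exp_ge_add_one_self[of "- c / x"] by simp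
  also have "\<dots> \<le> exp (- c * ln (1 + 1 / x))"
  proof -
    have "c * ln (1 + 1 / x) \<le> c * (1 / x)"
      using x c by (intro mult_left_mono ln_add_one_self_le_self) auto
    then show ?thesis by simp
  qed
  also have "\<dots> = ((x + 1) / x) powr (- c)"
    using x by (simp add: powr_def field_simps)
  also have "\<dots> = (x + 1) powr (- c) / x powr (- c)"
    by (rule powr_divide)
  finally show ?thesis using x by (simp add: field_simps)
qed

lemma prod_one_minus_harmonic_le:
  fixes a b k :: real
  assumes a: "a > 0" and b: "b > 0" and k: "k \<ge> 0"
    and nonneg: "\<And>t. 0 \<le> 1 - a / (b + real t) * k" and uv: "u \<le> v"
  shows "(\<Prod>t=u..<v. 1 - a / (b + real t) * k) \<le> (b + real u) powr (a * k) * (b + real v) powr (- (a * k))"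
  using uv
proof (induction v rule: dec_induct)
  case base
  show ?case using b by (simp add: powr_minus)
next
  case (step v)
  have "(\<Prod>t=u..<Suc v. 1 - a / (b + real t) * k) = (\<Prod>t=u..<v. 1 - a / (b + real t) * k) * (1 - a / (b + real v) * k)"
    using step.hyps by simp
  also have "\<dots> \<le> (b + real u) powr (a * k) * ((b + real v) powr (- (a * k)) * (1 - a * k / (b + real v)))"
    using mult_right_mono[OF step.IH nonneg[of v]] by simp
  also have "\<dots> \<le> (b + real u) powr (a * k) * (b + real v + 1) powr (- (a * k))"
    using a b k by (intro mult_left_mono powr_mult_one_minus_div_le) auto
  finally show ?case using step.hyps by (simp add: add_ac)
qed

lemma powr_pred_le_diff_powr:
  fixes x r :: real
  assumes x: "x > 0" and r: "r \<noteq> 0" "r \<le> 1"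
  shows "(x + 1) powr (r - 1) \<le> ((x + 1) powr r - x powr r) / r"
proof -
  have "\<And>y. x \<le> y \<Longrightarrow> y \<le> x + 1 \<Longrightarrow> ((\<lambda>z. z powr r) has_real_derivative r * y powr (r - 1)) (at y)"
    using x by (intro has_real_derivative_powr) auto
  then have "\<exists>z. x < z \<and> z < x + 1 \<and> (x + 1) powr r - x powr r = (x + 1 - x) * (r * z powr (r - 1))"
    by (intro MVT2) auto
  then obtain z where z: "x < z" "z < x + 1" "(x + 1) powr r - x powr r = r * z powr (r - 1)"
    by auto
  have "(x + 1) powr (r - 1) \<le> z powr (r - 1)" using z x r by (intro powr_mono2') auto
  also have "\<dots> = ((x + 1) powr r - x powr r) / r" using z(3) r by simp
  finally show ?thesis .
qed

lemma sum_shifted_powr_le: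
  fixes b r :: real
  assumes b: "b > 0" and r: "r \<noteq> 0" "r \<le> 1"
  shows "(\<Sum>i=1..n. (b + real i) powr (r - 1)) \<le> ((b + real n) powr r - b powr r) / r"
proof (induction n)
  case (Suc n)
  have "(\<Sum>i=1..Suc n. (b + real i) powr (r - 1)) = (\<Sum>i=1..n. (b + real i) powr (r - 1)) + (b + real n + 1) powr (r - 1)"
    by (simp add: algebra_simps)
  also have "\<dots> \<le> ((b + real n) powr r - b powr r) / r + ((b + real n + 1) powr r - (b + real n) powr r) / r"
    using b r by (intro add_mono Suc.IH powr_pred_le_diff_powr) auto
  also have "\<dots> = ((b + real (Suc n)) powr r - b powr r) / r"
    by (simp add: diff_divide_distrib add_ac)
  finally show ?case .
qed simp

lemma prev_step_sq_le:
  fixes a b :: real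
  assumes b: "b > 1" and i: "1 \<le> i"
  shows "(a / (b + real (i - 1)))\<^sup>2 \<le> 4 * a\<^sup>2 * (b + real i) powr (- 2)"
proof -
  define u where "u = b + real i"
  have "real i \<ge> 1" using i by simp
  then have u: "u \<ge> 2" using b unfolding u_def by linarith
  have shift: "b + real (i - 1) = u - 1" using i by (simp add: u_def of_nat_diff)
  have u_powr: "u powr (- 2) = 1 / u\<^sup>2"
    using u by (simp add: powr_minus powr_numeral divide_inverse)
  have "(u / 2)\<^sup>2 \<le> (u - 1)\<^sup>2" using u by (intro power_mono) auto
  then have "a\<^sup>2 / (u - 1)\<^sup>2 \<le> a\<^sup>2 / (u / 2)\<^sup>2" using u by (intro divide_left_mono) auto
  also have "\<dots> = 4 * a\<^sup>2 * (1 / u\<^sup>2)" by (simp add: power_divide)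
  finally show ?thesis by (simp only: shift power_divide u_powr u_def[symmetric])
qed

lemma contraction_prod_le:
  fixes a b lam mu :: real
  assumes a: "a > 0" and b: "b > 1" and mu: "0 \<le> mu" "mu \<le> lam"
    and small: "\<And>t. a / (b + real t) * lam \<le> 1 / 2" and jn: "j \<le> n"
  shows "(\<Prod>t=j+1..n. 1 - 2 * (a / (b + real t)) * lam)
    \<le> 4 powr (a * mu) * (b + real j) powr (2 * (a * mu)) * (b + real n) powr (- 2 * (a * mu))"
proof -
  have mu_le_lam: "a / (b + real t) * mu \<le> a / (b + real t) * lam" for t
    using mu a b by (intro mult_left_mono) auto
  have "(\<Prod>t=j+1..n. 1 - 2 * (a / (b + real t)) * lam) \<le> (\<Prod>t=j+1..n. 1 - a / (b + real t) * (2 * mu))"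
  proof (rule prod_mono)
    fix t
    show "0 \<le> 1 - 2 * (a / (b + real t)) * lam \<and> 1 - 2 * (a / (b + real t)) * lam \<le> 1 - a / (b + real t) * (2 * mu)"
      using small[of t] mu_le_lam[of t] by linarith
  qed
  also have "\<dots> = (\<Prod>t=Suc j..<Suc n. 1 - a / (b + real t) * (2 * mu))"
    by (simp only: atLeastLessThanSuc_atLeastAtMost flip: Suc_eq_plus1)
  also have "\<dots> \<le> (b + real (Suc j)) powr (a * (2 * mu)) * (b + real (Suc n)) powr (- (a * (2 * mu)))"
  proof (rule prod_one_minus_harmonic_le)
    show "0 \<le> 1 - a / (b + real t) * (2 * mu)" for t
      using small[of t] mu_le_lam[of t] by linarith
  qed (use a b mu jn in auto)
  also have "\<dots> = (b + real j + 1) powr (2 * (a * mu)) * (b + real n + 1) powr (- 2 * (a * mu))"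
    by (simp add: algebra_simps)
  also have "\<dots> \<le> (2 * (b + real j)) powr (2 * (a * mu)) * (b + real n) powr (- 2 * (a * mu))"
    using a b mu by (intro mult_mono powr_mono2 powr_mono2') auto
  also have "\<dots> = 4 powr (a * mu) * (b + real j) powr (2 * (a * mu)) * (b + real n) powr (- 2 * (a * mu))"
    using powr_powr[of 2 2 "a * mu"] powr_mult[of 2 "b + real j" "2 * (a * mu)"] b by simp
  finally show ?thesis .
qed

section \<open>The noise term \<open>S\<^sub>n\<close>\<close>

lemma noise_term_le:
  fixes \<alpha> :: "nat \<Rightarrow> real" and a b lam mu sig C :: real
  assumes step: "\<And>k. \<alpha> k = a / (b + real k)"
    and a: "a > 0" and b: "b > 1" and mu: "0 \<le> mu" "mu \<le> lam" and small: "a / b * lam \<le> 1 / 2"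
    and sig: "sig \<ge> 0" and C: "C \<ge> 0" and ij: "1 \<le> i" "i \<le> j" "j \<le> n"
  shows "2 * (\<alpha> (i - 1))\<^sup>2 * sig * ((\<Prod>t=j+1..n. 1 - 2 * \<alpha> t * lam) * ((\<alpha> j)\<^sup>2 * C) * (\<Prod>t=i..<j. 1 - \<alpha> t * mu))
    \<le> 8 * sig * C * a ^ 4 * 4 powr (a * mu) * (b + real n) powr (- 2 * (a * mu))
        * ((b + real i) powr (a * mu - 2) * (b + real j) powr (a * mu - 2))"
proof -
  define s where "s = a * mu"
  define u where "u = b + real i"
  define v where "v = b + real j"
  define P where "P = (b + real n) powr (- 2 * s)"
  have "v > 0" using b by (simp add: v_def)
  have small_t: "a / (b + real t) * lam \<le> 1 / 2" for t
  proof -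
    have "a / (b + real t) \<le> a / b" using a b by (intro divide_left_mono) auto
    from mult_right_mono[OF this, of lam] show ?thesis using small mu by linarith
  qed
  have mu_le_lam: "a / (b + real t) * mu \<le> a / (b + real t) * lam" for t
    using mu a b by (intro mult_left_mono) auto
  have q: "2 * (\<alpha> (i - 1))\<^sup>2 * sig \<le> 8 * a\<^sup>2 * sig * u powr (- 2)"
    using mult_left_mono[OF prev_step_sq_le[OF b ij(1), of a], of "2 * sig"] sig by (simp add: step u_def)
  have contr: "(\<Prod>t=j+1..n. 1 - 2 * \<alpha> t * lam) \<le> 4 powr s * v powr (2 * s) * P"
    using contraction_prod_le[OF a b mu small_t ij(3)] by (simp add: step s_def v_def P_def)
  have contr_nonneg: "0 \<le> (\<Prod>t=j+1..n. 1 - 2 * \<alpha> t * lam)"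
    using small_t by (intro prod_nonneg) (simp add: step algebra_simps)
  have step_j: "(\<alpha> j)\<^sup>2 * C = a\<^sup>2 * C * v powr (- 2)"
    using \<open>v > 0\<close> by (simp add: step v_def powr_minus powr_numeral divide_inverse power_mult_distrib power_inverse)
  have decay_nonneg: "0 \<le> 1 - \<alpha> t * mu" for t
    using small_t[of t] mu_le_lam[of t] unfolding step by linarith
  have decay: "(\<Prod>t=i..<j. 1 - \<alpha> t * mu) \<le> u powr s * v powr (- s)"
    using prod_one_minus_harmonic_le[OF a _ mu(1) _ ij(2), of b] b decay_nonneg
    by (simp add: step u_def v_def s_def)
  have "2 * (\<alpha> (i - 1))\<^sup>2 * sig * ((\<Prod>t=j+1..n. 1 - 2 * \<alpha> t * lam) * ((\<alpha> j)\<^sup>2 * C) * (\<Prod>t=i..<j. 1 - \<alpha> t * mu))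
      = 2 * (\<alpha> (i - 1))\<^sup>2 * sig * (\<Prod>t=j+1..n. 1 - 2 * \<alpha> t * lam) * ((\<alpha> j)\<^sup>2 * C) * (\<Prod>t=i..<j. 1 - \<alpha> t * mu)"
    by (simp only: mult.assoc)
  also have "\<dots> \<le> (8 * a\<^sup>2 * sig * u powr (- 2)) * (4 powr s * v powr (2 * s) * P) * (a\<^sup>2 * C * v powr (- 2)) * (u powr s * v powr (- s))"
    unfolding step_j
    by (rule mult_mono[OF mult_mono[OF mult_mono[OF q contr] order_refl] decay])
      (use sig C contr_nonneg decay_nonneg in \<open>auto intro!: mult_nonneg_nonneg prod_nonneg simp: P_def\<close>)
  also have "\<dots> = 8 * sig * C * a ^ 4 * 4 powr s * P * ((u powr s * u powr (- 2)) * (v powr (2 * s) * v powr (- 2) * v powr (- s)))"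
    by (simp add: algebra_simps power_numeral_reduce)
  also have "\<dots> = 8 * sig * C * a ^ 4 * 4 powr s * P * (u powr (s - 2) * v powr (s - 2))"
    by (simp add: powr_add [symmetric])
  finally show ?thesis unfolding P_def u_def v_def s_def .
qed

lemma noise_sum_le:
  fixes \<alpha> :: "nat \<Rightarrow> real" and a b lam mu sig C :: real
  assumes step: "\<And>k. \<alpha> k = a / (b + real k)"
    and a: "a > 0" and b: "b > 1" and mu: "0 \<le> mu" "mu \<le> lam" and small: "a / b * lam \<le> 1 / 2"
    and sig: "sig \<ge> 0" and C: "C \<ge> 0"
  shows "(\<Sum>i=1..n. 2 * (\<alpha> (i - 1))\<^sup>2 * sig
            * (\<Sum>j=i..n. (\<Prod>t=j+1..n. 1 - 2 * \<alpha> t * lam) * ((\<alpha> j)\<^sup>2 * C) * (\<Prod>t=i..<j. 1 - \<alpha> t * mu)))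
    \<le> 8 * sig * C * a ^ 4 * 4 powr (a * mu) * (b + real n) powr (- 2 * (a * mu))
        * (\<Sum>i=1..n. (b + real i) powr (a * mu - 2))\<^sup>2"
proof -
  define D where "D = 8 * sig * C * a ^ 4 * 4 powr (a * mu) * (b + real n) powr (- 2 * (a * mu))"
  define f where "f i = (b + real i) powr (a * mu - 2)" for i :: nat
  have "D \<ge> 0" using sig C a by (simp add: D_def)
  have "(\<Sum>i=1..n. 2 * (\<alpha> (i - 1))\<^sup>2 * sig
            * (\<Sum>j=i..n. (\<Prod>t=j+1..n. 1 - 2 * \<alpha> t * lam) * ((\<alpha> j)\<^sup>2 * C) * (\<Prod>t=i..<j. 1 - \<alpha> t * mu)))
      \<le> (\<Sum>i=1..n. \<Sum>j=i..n. D * (f i * f j))"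
    unfolding sum_distrib_left D_def f_def
    by (intro sum_mono noise_term_le[OF step a b mu small sig C]) auto
  also have "\<dots> \<le> (\<Sum>i=1..n. \<Sum>j=1..n. D * (f i * f j))"
    using \<open>D \<ge> 0\<close> by (intro sum_mono sum_mono2) (auto simp: f_def)
  also have "\<dots> = D * ((\<Sum>i=1..n. f i) * (\<Sum>i=1..n. f i))"
    by (subst sum_product) (simp add: sum_distrib_left)
  also have "\<dots> = D * (\<Sum>i=1..n. f i)\<^sup>2"
    by (simp add: power2_eq_square)
  finally show ?thesis unfolding D_def f_def .
qed

lemma sum_powr_sq_le_small_exponent:
  fixes b s :: real
  assumes b: "b > 1" and s: "0 \<le> s" "s < 2"
  obtains K where "\<And>n. (\<Sum>i=1..n. (b + real i) powr (s - 2))\<^sup>2 \<le> K * (b + real n) powr s"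
proof (cases "s = 0")
  case True
  have "(\<Sum>i=1..n. (b + real i) powr (s - 2))\<^sup>2 \<le> 1 * (b + real n) powr s" for n
  proof -
    have "(\<Sum>i=1..n. (b + real i) powr (- 1 - 1)) \<le> ((b + real n) powr (- 1) - b powr (- 1)) / (- 1)"
      using b by (intro sum_shifted_powr_le) auto
    also have "\<dots> \<le> 1"
    proof -
      have "inverse b \<le> 1" "0 \<le> inverse (b + real n)" using b by (auto simp: inverse_le_1_iff)
      then have "inverse b - inverse (b + real n) \<le> 1" by linarith
      then show ?thesis using b by (simp add: powr_minus)
    qed
    finally have "(\<Sum>i=1..n. (b + real i) powr (s - 2)) \<le> 1" using True by simp
    moreover have "0 \<le> (\<Sum>i=1..n. (b + real i) powr (s - 2))" by (intro sum_nonneg) auto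
    ultimately show ?thesis using True b by (simp add: power_le_one)
  qed
  then show ?thesis using that by blast
next
  case False
  have "(\<Sum>i=1..n. (b + real i) powr (s - 2))\<^sup>2 \<le> 4 / s\<^sup>2 * (b + real n) powr s" for n
  proof -
    have "(\<Sum>i=1..n. (b + real i) powr (s - 2)) \<le> (\<Sum>i=1..n. (b + real i) powr (s / 2 - 1))"
      using b s by (intro sum_mono powr_mono) auto
    also have "\<dots> \<le> ((b + real n) powr (s / 2) - b powr (s / 2)) / (s / 2)"
      using b s False by (intro sum_shifted_powr_le) auto
    also have "\<dots> \<le> (b + real n) powr (s / 2) / (s / 2)"
      using s False by (intro divide_right_mono) auto
    finally have "(\<Sum>i=1..n. (b + real i) powr (s - 2)) \<le> (b + real n) powr (s / 2) / (s / 2)" .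
    moreover have "0 \<le> (\<Sum>i=1..n. (b + real i) powr (s - 2))" by (intro sum_nonneg) auto
    ultimately have "(\<Sum>i=1..n. (b + real i) powr (s - 2))\<^sup>2 \<le> ((b + real n) powr (s / 2) / (s / 2))\<^sup>2"
      by (intro power_mono)
    also have "\<dots> = 4 / s\<^sup>2 * (b + real n) powr s"
      using b by (simp add: power_divide power2_eq_square flip: powr_add)
    finally show ?thesis .
  qed
  then show ?thesis using that by blast
qed

lemma sum_powr_le_large_exponent:
  fixes b s :: real
  assumes b: "b > 1" and s: "s > 2"
  shows "(\<Sum>i=1..n. (b + real i) powr (s - 2)) \<le> (b + real n) powr (s - 1)"
proof -
  have "(\<Sum>i=1..n. (b + real i) powr (s - 2)) \<le> (\<Sum>i=1..n. (b + real n) powr (s - 2))"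
    using b s by (intro sum_mono powr_mono2) auto
  also have "\<dots> \<le> (b + real n) * (b + real n) powr (s - 2)"
    using b by (simp add: mult_right_mono)
  also have "\<dots> = (b + real n) powr (s - 1)"
    using b powr_add[of "b + real n" 1 "s - 2"] by simp
  finally show ?thesis .
qed

lemma decay_rates_of_noise_bound:
  fixes S :: "nat \<Rightarrow> real" and b s D :: real
  assumes bound: "\<And>n. S n \<le> D * (b + real n) powr (- 2 * s) * (\<Sum>i=1..n. (b + real i) powr (s - 2))\<^sup>2"
    and D: "D \<ge> 0" and b: "b > 1" and s: "s \<ge> 0"
  shows "(s < 2 \<longrightarrow> (\<exists>K. \<forall>n\<ge>1. S n \<le> K * (b + real n) powr (- s)))
       \<and> (s > 2 \<longrightarrow> (\<exists>K. \<forall>n\<ge>1. S n \<le> K * (b + real n) powr (- 2)))"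
proof (intro conjI impI)
  assume "s < 2"
  then obtain K where K: "\<And>n. (\<Sum>i=1..n. (b + real i) powr (s - 2))\<^sup>2 \<le> K * (b + real n) powr s"
    using sum_powr_sq_le_small_exponent b s by blast
  have "S n \<le> D * K * (b + real n) powr (- s)" for n
  proof -
    have "S n \<le> D * (b + real n) powr (- 2 * s) * (K * (b + real n) powr s)"
      using order_trans[OF bound mult_left_mono[OF K]] D by simp
    also have "\<dots> = D * K * (b + real n) powr (- s)"
      by (simp add: powr_add [symmetric] algebra_simps)
    finally show ?thesis .
  qed
  then show "\<exists>K. \<forall>n\<ge>1. S n \<le> K * (b + real n) powr (- s)" by blast
next
  assume "s > 2"
  have "S n \<le> D * (b + real n) powr (- 2)" for n
  proof -
    have "(\<Sum>i=1..n. (b + real i) powr (s - 2))\<^sup>2 \<le> ((b + real n) powr (s - 1))\<^sup>2"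
      using sum_powr_le_large_exponent[OF b \<open>s > 2\<close>] by (intro power_mono sum_nonneg) auto
    then have "S n \<le> D * (b + real n) powr (- 2 * s) * ((b + real n) powr (s - 1))\<^sup>2"
      using order_trans[OF bound mult_left_mono] D by simp
    also have "\<dots> = D * (b + real n) powr (- 2)"
      by (simp add: power2_eq_square powr_add [symmetric])
    finally show ?thesis .
  qed
  then show "\<exists>K. \<forall>n\<ge>1. S n \<le> K * (b + real n) powr (- 2)" by blast
qed

lemma Sn_le_sum_powr_sq:
  fixes A :: "real mat" and a b :: real
  assumes A: "A \<in> carrier_mat M N" and l: "1 \<le> l" "l \<le> N"
    and ab: "a > 0" "b > 1" "a / b \<le> 1 / (2 * real M * Ltil A)"
  obtains D where "D \<ge> 0"
    "\<And>n. Sn A bv l (\<lambda>k. a / (b + real k)) n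
       \<le> D * (b + real n) powr (- 2 * (a * (sigma_min A)\<^sup>2)) * (\<Sum>i=1..n. (b + real i) powr (a * (sigma_min A)\<^sup>2 - 2))\<^sup>2"
proof -
  define lam where "lam = (sing_val A l)\<^sup>2"
  define mu where "mu = (sigma_min A)\<^sup>2"
  define C where "C = real M * Ltil A * cond_num A * (sigma_max A)\<^sup>2"
  define sig where "sig = noise_var A bv"
  have "0 < a / b" using ab by simp
  have step_bound: "a / b \<le> 1 / (2 * (real M * Ltil A))" using ab(3) by (simp add: mult.assoc)
  have MLtil_pos: "real M * Ltil A > 0"
    using pos_if_le_inverse_double[OF \<open>0 < a / b\<close> step_bound] .
  have mu_lam: "mu \<le> lam"
    using sing_val_sq_antimono[OF A l(1) l(2) order.refl] A by (simp add: mu_def lam_def sigma_min_def)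
  have "lam \<le> real M * Ltil A"
    using sing_val_sq_le_sum_row_sqnorms[OF A l] sum_row_sqnorms_le_Ltil[OF A] by (simp add: lam_def)
  then have small: "a / b * lam \<le> 1 / 2"
    using step_size_mult_le_half[OF \<open>0 < a / b\<close> step_bound] by blast
  have sig: "sig \<ge> 0"
    unfolding sig_def noise_var_def by (intro divide_nonneg_nonneg sum_nonneg sqnorm_nonneg) auto
  have C: "C \<ge> 0" using MLtil_pos by (simp add: C_def cond_num_def)
  have "Sn A bv l (\<lambda>k. a / (b + real k)) n
      \<le> 8 * sig * C * a ^ 4 * 4 powr (a * mu) * (b + real n) powr (- 2 * (a * mu))
        * (\<Sum>i=1..n. (b + real i) powr (a * mu - 2))\<^sup>2" for n
    using noise_sum_le[of "\<lambda>k. a / (b + real k)" a b mu lam sig C n] ab A mu_lam small sig C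
    by (simp add: Sn_def Bkn_def qfac_def Afac_def pfac_def Bfac_def mu_def lam_def C_def sig_def
        mult.assoc)
  moreover have "8 * sig * C * a ^ 4 * 4 powr (a * mu) \<ge> 0"
    using sig C by simp
  ultimately show ?thesis using that unfolding mu_def by blast
qed

theorem lemma16:
  fixes A :: "real mat" and bv :: "real vec" and M N l :: nat and a b :: real
  assumes dims: "A \<in> carrier_mat M N" "bv \<in> carrier_vec M"
    and MN: "N \<le> M" "0 < N"
    and full_rank: "\<forall>x \<in> carrier_vec N. A *\<^sub>v x = 0\<^sub>v M \<longrightarrow> x = 0\<^sub>v N"
    and l: "1 \<le> l" "l \<le> N"
    and ab: "a > 0" "b > 1" "a / b \<le> 1 / (2 * real M * Ltil A)"
  shows "(a * (sigma_min A)^2 < 2 \<longrightarrow>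
            (\<exists>K. \<forall>n\<ge>1. Sn A bv l (\<lambda>k. a / (b + real k)) n
                          \<le> K * (b + real n) powr (- (a * (sigma_min A)^2))))
       \<and> (a * (sigma_min A)^2 > 2 \<longrightarrow>
            (\<exists>K. \<forall>n\<ge>1. Sn A bv l (\<lambda>k. a / (b + real k)) n \<le> K * (b + real n) powr (-2)))"
proof -
  obtain D where D: "D \<ge> 0"
    "\<And>n. Sn A bv l (\<lambda>k. a / (b + real k)) n
       \<le> D * (b + real n) powr (- 2 * (a * (sigma_min A)\<^sup>2)) * (\<Sum>i=1..n. (b + real i) powr (a * (sigma_min A)\<^sup>2 - 2))\<^sup>2"
    using Sn_le_sum_powr_sq[OF dims(1) l ab] by blast
  moreover have "a * (sigma_min A)\<^sup>2 \<ge> 0" using ab by simp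
  ultimately show ?thesis
    using decay_rates_of_noise_bound[OF D(2) D(1) ab(2)] by simp
qed

end
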